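(* Consider a regulator with opening degree $o\in[0,1]$ ($o=1$: fully open, "open mode"; $o=0$: fully closed, "closed mode"), whose operation point is given by continuous functions $o\mapsto (p_\ell(o),p_r(o),q(o))\in\mathbb{R}^3$ such that $p_\ell$ is nonincreasing in $o$, $p_r$ is nondecreasing in $o$, and $q$ is nondecreasing in $o$. Let the six target values $\underline{p}_\ell,\overline{p}_\ell,\underline{p}_r,\overline{p}_r,\underline{q},\overline{q}\in[0,\infty]$ be given (with priorities, directions and violation rules as in the context), and assume that $\underline{q}$ is violated at every opening degree (e.g. $\underline{q}=\infty$). Let $o^*\in[0,1]$ be the current opening degree and let $\rho$ be a pushing target value at $o^*$, with direction $d(\rho)$. Assume the regulator is perfectly adjusted at $o^*$ in the following sense: either ($d(\rho)$ = opening and $o^*=1$), or ($d(\rho)$ = closing and $o^*=0$), or for every $o'\neq o^*$ lying in the direction $d(\rho)$ from $o^*$ (i.e. $o'\in(o^*,1]$ if $d(\rho)$ = opening, $o'\in[0,o^* )$ if $d(\rho)$ = closing) there is a target value $\tau$ with $\pi(\tau)>\pi(\rho)$ that is violated at the operation point $(p_\ell(o'),p_r(o'),q(o'))$. Then at least one of the following holds: 1) there exists a target value $\tau$ (a "stable" target value) with $\pi(\tau)>\pi(\rho)$ and $d(\tau)\neq d(\rho)$ whose value equals its associated quantity at $o^*$ (e.g. $\underline{p}_\ell=p_\ell(o^* )$ if $\tau=\underline{p}_\ell$); 2) the regulator is fully open ($o^*=1$) and $\rho$ is an opening target value; 3) the regulator is fully closed ($o^*=0$) and $\rho$ is a closing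 target value.
   Context: Target values, their associated quantity, bound type, priority $\pi$ and direction $d$ (the direction in which the regulator changes its opening degree when the target value is violated): - $\underline{p}_\ell$ (minimal left pressure): lower bound $\underline{p}_\ell\le p_\ell$, $\pi=4$, closing; - $\overline{p}_r$ (maximal right pressure): upper bound $\overline{p}_r\ge p_r$, $\pi=4$, closing; - $\overline{p}_\ell$ (maximal left pressure): upper bound $\overline{p}_\ell\ge p_\ell$, $\pi=3$, opening; - $\underline{p}_r$ (minimal right pressure): lower bound $\underline{p}_r\le p_r$, $\pi=3$, opening; - $\overline{q}$ (maximal flow): upper bound $\overline{q}\ge q$, $\pi=2$, closing; - $\underline{q}$ (minimal flow): lower bound $\underline{q}\le q$, $\pi=1$, opening. A target value is satisfied at an operation point $(p_\ell,p_r,q)$ if its imposed bound holds and violated otherwise (a lower bound $\tau\le x$ is violated iff $x<\tau$; an upper bound $\tau\ge x$ is violated iff $x>\tau$). Closing means decreasing $o$, opening means increasing $o$. A pushing target value at $o^*$ is a target value that is violated at $(p_\ell(o^* ),p_r(o^* ),q(o^* ))$ and has maximal priority $\pi$ among all violated target values there (all violated target values of maximal priority have the same direction, since equal priorities only occur for equal directions). The setting models the "perfect control" assumption: the regulator reacts immediately and with perfect precision to target values according to the priorities, so the opening degree cannot be changed in the pushing direction without violating a higher-priority target value. The regulator is assumed not to be closed by its built-in check valve. *)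

theory Defs
  imports "HOL-Analysis.Analysis" "HOL-Library.Extended_Real"
begin

datatype target = PlMin | PrMax | PlMax | PrMin | QMax | QMin

datatype direction = Opening | Closing

datatype bound = Lower | Upper

fun prio :: "target \<Rightarrow> nat" where
  "prio PlMin = 4" | "prio PrMax = 4" | "prio PlMax = 3"
| "prio PrMin = 3" | "prio QMax = 2" | "prio QMin = 1"

fun dir :: "target \<Rightarrow> direction" where
  "dir PlMin = Closing" | "dir PrMax = Closing" | "dir PlMax = Opening"
| "dir PrMin = Opening" | "dir QMax = Closing" | "dir QMin = Opening"

fun bnd :: "target \<Rightarrow> bound" where
  "bnd PlMin = Lower" | "bnd PrMax = Upper" | "bnd PlMax = Upper"
| "bnd PrMin = Lower" | "bnd QMax = Upper" | "bnd QMin = Lower"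

fun qty :: "target \<Rightarrow> real \<times> real \<times> real \<Rightarrow> real" where
  "qty PlMin (pl, pr, q) = pl" | "qty PlMax (pl, pr, q) = pl"
| "qty PrMin (pl, pr, q) = pr" | "qty PrMax (pl, pr, q) = pr"
| "qty QMin (pl, pr, q) = q" | "qty QMax (pl, pr, q) = q"

definition violated :: "(target \<Rightarrow> ereal) \<Rightarrow> target \<Rightarrow> real \<times> real \<times> real \<Rightarrow> bool" where
  "violated T t x = (case bnd t of
      Lower \<Rightarrow> ereal (qty t x) < T t
    | Upper \<Rightarrow> ereal (qty t x) > T t)"

definition pushing :: "(target \<Rightarrow> ereal) \<Rightarrow> target \<Rightarrow> real \<times> real \<times> real \<Rightarrow> bool" where
  "pushing T rho x = (violated T rho x \<and> (\<forall>t. violated T t x \<longrightarrow> prio t \<le> prio rho))"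

end

theory Submission
  imports Defs
begin

text \<open>
  By pushing, every target value of priority above \<open>\<pi>(\<rho>)\<close> is satisfied at \<open>o*\<close>.
  Suppose none of them is stable. A satisfied target value that is not tight stays satisfied
  near \<open>o*\<close> by continuity; a tight one has direction \<open>d(\<rho>)\<close>, and moving the opening degree in
  its own direction moves its quantity away from its bound, so it stays satisfied as well.
  As there are finitely many target values, all of them are then satisfied at opening degrees
  just beyond \<open>o*\<close> in direction \<open>d(\<rho>)\<close>, contradicting perfect adjustment.
\<close>

instance target :: finite
proof
  have "UNIV = {PlMin, PrMax, PlMax, PrMin, QMax, QMin}"
    using target.exhaust by auto
  then show "finite (UNIV :: target set)"
    by (metis finite.emptyI finite_insert)
qed

fun lies_ahead :: "direction \<Rightarrow> real \<Rightarrow> real \<Rightarrow> bool" where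
  "lies_ahead Opening a s \<longleftrightarrow> a \<le> s"
| "lies_ahead Closing a s \<longleftrightarrow> s \<le> a"

lemma tendsto_qty:
  assumes "(X \<longlongrightarrow> x) F"
  shows "((\<lambda>s. qty t (X s)) \<longlongrightarrow> qty t x) F"
proof -
  have "qty t = fst \<or> qty t = fst \<circ> snd \<or> qty t = snd \<circ> snd"
    by (cases t) (auto simp: fun_eq_iff)
  then show ?thesis
    using tendsto_fst[OF assms] tendsto_fst[OF tendsto_snd[OF assms]]
      tendsto_snd[OF tendsto_snd[OF assms]]
    by auto
qed

lemma eventually_not_violated_if_slack:
  assumes lim: "(X \<longlongrightarrow> x) F"
    and sat: "\<not> violated T t x"
    and slack: "T t \<noteq> ereal (qty t x)"
  shows "eventually (\<lambda>s. \<not> violated T t (X s)) F"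
proof -
  have lim_ereal: "((\<lambda>s. ereal (qty t (X s))) \<longlongrightarrow> ereal (qty t x)) F"
    using tendsto_qty[OF lim] by (rule tendsto_ereal)
  show ?thesis
  proof (cases "bnd t")
    case Lower
    with sat slack have "T t < ereal (qty t x)"
      by (auto simp: violated_def)
    from order_tendstoD(1)[OF lim_ereal this] show ?thesis
      by eventually_elim (simp add: violated_def Lower)
  next
    case Upper
    with sat slack have "ereal (qty t x) < T t"
      by (auto simp: violated_def)
    from order_tendstoD(2)[OF lim_ereal this] show ?thesis
      by eventually_elim (simp add: violated_def Upper)
  qed
qed

lemma not_violated_ahead_if_tight:
  fixes pl pr q :: "real \<Rightarrow> real"
  assumes mono_pl: "\<And>x y. 0 \<le> x \<Longrightarrow> x \<le> y \<Longrightarrow> y \<le> 1 \<Longrightarrow> pl y \<le> pl x"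
    and mono_pr: "\<And>x y. 0 \<le> x \<Longrightarrow> x \<le> y \<Longrightarrow> y \<le> 1 \<Longrightarrow> pr x \<le> pr y"
    and mono_q: "\<And>x y. 0 \<le> x \<Longrightarrow> x \<le> y \<Longrightarrow> y \<le> 1 \<Longrightarrow> q x \<le> q y"
    and range: "a \<in> {0..1}" "s \<in> {0..1}"
    and tight: "T t = ereal (qty t (pl a, pr a, q a))"
    and ahead: "lies_ahead (dir t) a s"
  shows "\<not> violated T t (pl s, pr s, q s)"
  using range ahead tight mono_pl[of s a] mono_pl[of a s] mono_pr[of s a] mono_pr[of a s]
    mono_q[of s a] mono_q[of a s]
  by (cases t) (auto simp: violated_def)

lemma stable_target_exists:
  fixes pl pr q :: "real \<Rightarrow> real" and S :: "real set"
  assumes cont: "continuous_on {0..1} pl" "continuous_on {0..1} pr" "continuous_on {0..1} q"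
    and mono_pl: "\<And>x y. 0 \<le> x \<Longrightarrow> x \<le> y \<Longrightarrow> y \<le> 1 \<Longrightarrow> pl y \<le> pl x"
    and mono_pr: "\<And>x y. 0 \<le> x \<Longrightarrow> x \<le> y \<Longrightarrow> y \<le> 1 \<Longrightarrow> pr x \<le> pr y"
    and mono_q: "\<And>x y. 0 \<le> x \<Longrightarrow> x \<le> y \<Longrightarrow> y \<le> 1 \<Longrightarrow> q x \<le> q y"
    and a_range: "a \<in> {0..1}"
    and push: "pushing T rho (pl a, pr a, q a)"
    and S: "S \<subseteq> {0..1}" "a islimpt S" "\<And>s. s \<in> S \<Longrightarrow> lies_ahead (dir rho) a s"
    and adjusted: "\<And>s. s \<in> S \<Longrightarrow> \<exists>t. prio t > prio rho \<and> violated T t (pl s, pr s, q s)"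
  shows "\<exists>t. prio t > prio rho \<and> dir t \<noteq> dir rho \<and> T t = ereal (qty t (pl a, pr a, q a))"
proof (rule ccontr)
  assume no_stable: "\<not> ?thesis"
  let ?F = "at a within S"
  have lim: "((\<lambda>s. (pl s, pr s, q s)) \<longlongrightarrow> (pl a, pr a, q a)) ?F"
    using cont a_range S(1) unfolding continuous_on_def
    by (intro tendsto_Pair) (auto intro: tendsto_within_subset)
  have in_S: "eventually (\<lambda>s. s \<in> S) ?F"
    by (simp add: eventually_at_filter)
  have "eventually (\<lambda>s. prio t > prio rho \<longrightarrow> \<not> violated T t (pl s, pr s, q s)) ?F" for t
  proof (cases "prio t > prio rho")
    case higher: True
    with push have sat: "\<not> violated T t (pl a, pr a, q a)"
      unfolding pushing_def by force
    show ?thesis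
    proof (cases "T t = ereal (qty t (pl a, pr a, q a))")
      case tight: True
      with no_stable higher have same_dir: "dir t = dir rho"
        by blast
      from in_S show ?thesis
      proof eventually_elim
        case (elim s)
        with S have "s \<in> {0..1}" "lies_ahead (dir t) a s"
          by (auto simp: same_dir)
        then show ?case
          by (intro impI not_violated_ahead_if_tight[of pl pr q a s T t] mono_pl mono_pr mono_q
              a_range tight)
      qed
    next
      case False
      from eventually_not_violated_if_slack[OF lim sat False] show ?thesis
        by eventually_elim simp
    qed
  qed simp
  then have "eventually (\<lambda>s. \<forall>t. prio t > prio rho \<longrightarrow> \<not> violated T t (pl s, pr s, q s)) ?F"
    by (rule eventually_all_finite)
  with in_S have "eventually (\<lambda>s. False) ?F"
    by eventually_elim (use adjusted in blast)
  with S(2) show False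
    by (simp add: trivial_limit_within eventually_False)
qed

theorem theorem1:
  fixes pl pr q :: "real \<Rightarrow> real" and T :: "target \<Rightarrow> ereal"
    and ostar :: real and rho :: target
  assumes cont_pl: "continuous_on {0..1} pl"
    and cont_pr: "continuous_on {0..1} pr"
    and cont_q: "continuous_on {0..1} q"
    and mono_pl: "\<And>x y. 0 \<le> x \<Longrightarrow> x \<le> y \<Longrightarrow> y \<le> 1 \<Longrightarrow> pl y \<le> pl x"
    and mono_pr: "\<And>x y. 0 \<le> x \<Longrightarrow> x \<le> y \<Longrightarrow> y \<le> 1 \<Longrightarrow> pr x \<le> pr y"
    and mono_q: "\<And>x y. 0 \<le> x \<Longrightarrow> x \<le> y \<Longrightarrow> y \<le> 1 \<Longrightarrow> q x \<le> q y"
    and T_nonneg: "\<And>t. 0 \<le> T t"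
    and qmin_viol: "\<And>s. 0 \<le> s \<Longrightarrow> s \<le> 1 \<Longrightarrow> violated T QMin (pl s, pr s, q s)"
    and ostar_range: "0 \<le> ostar" "ostar \<le> 1"
    and push: "pushing T rho (pl ostar, pr ostar, q ostar)"
    and adjusted:
      "(dir rho = Opening \<and> ostar = 1) \<or> (dir rho = Closing \<and> ostar = 0) \<or>
       (\<forall>s'. ((dir rho = Opening \<and> ostar < s' \<and> s' \<le> 1) \<or>
              (dir rho = Closing \<and> 0 \<le> s' \<and> s' < ostar)) \<longrightarrow>
            (\<exists>t. prio t > prio rho \<and> violated T t (pl s', pr s', q s')))"
  shows "(\<exists>t. prio t > prio rho \<and> dir t \<noteq> dir rho \<and>
              T t = ereal (qty t (pl ostar, pr ostar, q ostar)))
         \<or> (ostar = 1 \<and> dir rho = Opening)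
         \<or> (ostar = 0 \<and> dir rho = Closing)"
proof (cases "dir rho")
  case Opening
  show ?thesis
  proof (cases "ostar = 1")
    case False
    with ostar_range have "ostar islimpt {ostar<..1}"
      by simp
    with Opening adjusted False ostar_range show ?thesis
      by (intro disjI1 stable_target_exists[where S = "{ostar<..1}"] cont_pl cont_pr cont_q
          mono_pl mono_pr mono_q push) auto
  qed (simp add: Opening)
next
  case Closing
  show ?thesis
  proof (cases "ostar = 0")
    case False
    with ostar_range have "ostar islimpt {0..<ostar}"
      by simp
    with Closing adjusted False ostar_range show ?thesis
      by (intro disjI1 stable_target_exists[where S = "{0..<ostar}"] cont_pl cont_pr cont_q
          mono_pl mono_pr mono_q push) auto
  qed (simp add: Closing)
qed

end
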